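(* A closed reversible reaction network $(X,\mathscr{R})$ with stoichiometric matrix $S$ is free of cornucopias and abysses if and only if there is no vector $v\in\mathbb{R}^{\mathscr{R}}$ such that $Sv>0$.
   Context: A reaction network (RN) $(X,\mathscr{R})$ consists of a finite non-empty set $X$ of species and a finite non-empty set $\mathscr{R}$ of reactions. Each reaction $r$ is given by stoichiometric coefficients $s^-_{xr},s^+_{xr}\in\mathbb{N}_0$. The stoichiometric matrix $S\in\mathbb{Z}^{X\times\mathscr{R}}$ has entries $S_{xr}=s^+_{xr}-s^-_{xr}$. The RN is closed if every reaction $r$ has $x,y$ with $S_{xr}<0<S_{yr}$. The reverse $\bar r$ of $r$ has $s^-_{x\bar r}=s^+_{xr}$ and $s^+_{x\bar r}=s^-_{xr}$. The RN is reversible if $r\in\mathscr{R}$ implies $\bar r\in\mathscr{R}$. For a real vector $w$, $w>0$ means $w$ is componentwise non-negative and nonzero, and $w<0$ means $-w>0$. A vector $v\in\mathbb{R}^{\mathscr{R}}$ with $v>0$ is a cornucopia if $Sv>0$ and an abyss if $Sv<0$. *)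

theory Defs
  imports Complex_Main
begin

text \<open>Species form a finite (nonempty) type 'x.  A reaction is given by its pair of
  stoichiometric coefficient vectors (s^-, s^+); a reaction network is a finite
  nonempty set R of such reactions.\<close>

type_synonym 'x reaction = "('x \<Rightarrow> nat) \<times> ('x \<Rightarrow> nat)"

definition reaction_network :: "'x::finite reaction set \<Rightarrow> bool" where
  "reaction_network R \<longleftrightarrow> finite R \<and> R \<noteq> {}"

definition stoich :: "'x \<Rightarrow> 'x reaction \<Rightarrow> int" where
  "stoich x r = int (snd r x) - int (fst r x)"

definition rev_reaction :: "'x reaction \<Rightarrow> 'x reaction" where
  "rev_reaction r = (snd r, fst r)"

definition closed_RN :: "'x reaction set \<Rightarrow> bool" where
  "closed_RN R \<longleftrightarrow> (\<forall>r\<in>R. \<exists>x y. stoich x r < 0 \<and> 0 < stoich y r)"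

definition reversible_RN :: "'x reaction set \<Rightarrow> bool" where
  "reversible_RN R \<longleftrightarrow> (\<forall>r\<in>R. rev_reaction r \<in> R)"

text \<open>w > 0 on an index set I: componentwise nonnegative and nonzero.\<close>
definition vpos :: "'i set \<Rightarrow> ('i \<Rightarrow> real) \<Rightarrow> bool" where
  "vpos I w \<longleftrightarrow> (\<forall>i\<in>I. 0 \<le> w i) \<and> (\<exists>i\<in>I. w i \<noteq> 0)"

definition vneg :: "'i set \<Rightarrow> ('i \<Rightarrow> real) \<Rightarrow> bool" where
  "vneg I w \<longleftrightarrow> vpos I (\<lambda>i. - w i)"

definition Smult :: "'x reaction set \<Rightarrow> ('x reaction \<Rightarrow> real) \<Rightarrow> 'x \<Rightarrow> real" where
  "Smult R v x = (\<Sum>r\<in>R. real_of_int (stoich x r) * v r)"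

definition cornucopia :: "'x::finite reaction set \<Rightarrow> ('x reaction \<Rightarrow> real) \<Rightarrow> bool" where
  "cornucopia R v \<longleftrightarrow> vpos R v \<and> vpos (UNIV::'x set) (Smult R v)"

definition abyss :: "'x::finite reaction set \<Rightarrow> ('x reaction \<Rightarrow> real) \<Rightarrow> bool" where
  "abyss R v \<longleftrightarrow> vpos R v \<and> vneg (UNIV::'x set) (Smult R v)"

end

theory Submission
  imports Defs
begin

text \<open>Reversibility makes the reaction vectors of R symmetric under negation, so every vector
  in the image of S is already S w for some w \<ge> 0 (split v into positive and negative parts
  and let the reverse reactions carry the negative part). Hence a cornucopia exists as soon
  as S v > 0 for some v, and an abyss v yields S (v \<circ> rev) = - S v > 0.\<close>

lemma rev_reaction_rev_reaction [simp]: "rev_reaction (rev_reaction r) = r"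
  by (simp add: rev_reaction_def)

lemma stoich_rev_reaction [simp]: "stoich x (rev_reaction r) = - stoich x r"
  by (simp add: rev_reaction_def stoich_def)

lemma bij_betw_rev_reaction:
  assumes "reversible_RN R"
  shows "bij_betw rev_reaction R R"
  by (rule bij_betw_byWitness[where f' = rev_reaction])
     (use assms in \<open>auto simp: reversible_RN_def\<close>)

lemma Smult_add: "Smult R (\<lambda>r. v r + w r) x = Smult R v x + Smult R w x"
  by (simp add: Smult_def distrib_left sum.distrib)

lemma Smult_diff: "Smult R (\<lambda>r. v r - w r) x = Smult R v x - Smult R w x"
  by (simp add: Smult_def right_diff_distrib sum_subtractf)

lemma Smult_eq_0:
  assumes "\<forall>r\<in>R. v r = 0"
  shows "Smult R v x = 0"
  using assms by (simp add: Smult_def)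

lemma Smult_comp_rev_reaction:
  assumes "reversible_RN R"
  shows "Smult R (\<lambda>r. v (rev_reaction r)) x = - Smult R v x"
proof -
  let ?h = "\<lambda>r. real_of_int (stoich x (rev_reaction r)) * v r"
  have "Smult R (\<lambda>r. v (rev_reaction r)) x = (\<Sum>r\<in>R. ?h (rev_reaction r))"
    by (simp add: Smult_def)
  also have "\<dots> = (\<Sum>r\<in>R. ?h r)"
    by (rule sum.reindex_bij_betw[OF bij_betw_rev_reaction[OF assms]])
  also have "\<dots> = - Smult R v x"
    by (simp add: Smult_def sum_negf)
  finally show ?thesis .
qed

lemma Smult_eq_Smult_nonneg:
  assumes "reversible_RN R"
  obtains w where "\<And>r. 0 \<le> w r" and "Smult R w = Smult R v"
proof
  let ?pos = "\<lambda>r. max (v r) 0" and ?neg = "\<lambda>r. max (- v r) 0"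
  show "0 \<le> ?pos r + ?neg (rev_reaction r)" for r
    by simp
  show "Smult R (\<lambda>r. ?pos r + ?neg (rev_reaction r)) = Smult R v"
  proof
    fix x
    have "Smult R (\<lambda>r. ?pos r + ?neg (rev_reaction r)) x = Smult R ?pos x - Smult R ?neg x"
      by (simp only: Smult_add Smult_comp_rev_reaction[OF assms, of ?neg])
    also have "\<dots> = Smult R (\<lambda>r. ?pos r - ?neg r) x"
      by (simp only: Smult_diff)
    also have "(\<lambda>r. ?pos r - ?neg r) = v"
      by (auto simp: max_def)
    finally show "Smult R (\<lambda>r. ?pos r + ?neg (rev_reaction r)) x = Smult R v x" .
  qed
qed

lemma ex_cornucopia_iff_ex_Smult_pos:
  assumes "reversible_RN R"
  shows "(\<exists>v. cornucopia R v) \<longleftrightarrow> (\<exists>v. vpos (UNIV :: 'x::finite set) (Smult R v))"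
proof
  assume "\<exists>v. vpos (UNIV :: 'x set) (Smult R v)"
  then obtain v where pos: "vpos (UNIV :: 'x set) (Smult R v)"
    by blast
  obtain w where w_nonneg: "\<And>r. 0 \<le> w r" and Sw: "Smult R w = Smult R v"
    using Smult_eq_Smult_nonneg[OF assms] by blast
  have "\<exists>r\<in>R. w r \<noteq> 0"
    using pos Smult_eq_0[of R w] by (auto simp: Sw[symmetric] vpos_def)
  with w_nonneg pos have "cornucopia R w"
    by (simp add: cornucopia_def vpos_def Sw)
  then show "\<exists>v. cornucopia R v" by blast
qed (auto simp: cornucopia_def)

lemma abyss_imp_Smult_comp_rev_reaction_pos:
  assumes "reversible_RN R" and "abyss R v"
  shows "vpos (UNIV :: 'x::finite set) (Smult R (\<lambda>r. v (rev_reaction r)))"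
proof -
  have "Smult R (\<lambda>r. v (rev_reaction r)) = (\<lambda>x. - Smult R v x)"
    using Smult_comp_rev_reaction[OF assms(1)] by blast
  with assms(2) show ?thesis
    by (simp add: abyss_def vneg_def)
qed

theorem proposition6:
  fixes R :: "('x::finite) reaction set"
  assumes "reaction_network R" and "closed_RN R" and "reversible_RN R"
  shows "((\<nexists>v. cornucopia R v) \<and> (\<nexists>v. abyss R v))
           \<longleftrightarrow> (\<nexists>v. vpos (UNIV::'x set) (Smult R v))"
  using ex_cornucopia_iff_ex_Smult_pos[OF assms(3)]
    abyss_imp_Smult_comp_rev_reaction_pos[OF assms(3)]
  by blast

end
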